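(* In $M_2(\mathbb{C})[x]$ let $\beta_0=e_{12}$ and $\beta_1=Ix+e_{21}x^2$. Then the set $$\{\beta_1^j\beta_0: j\ge0\}\cup\{\beta_1^j\beta_0\beta_1\beta_0: j\ge0\}$$ is linearly independent over $\mathbb{C}$.
   Context: $e_{r,s}$ denotes the $2\times2$ matrix with $1$ in entry $(r,s)$ and zeros elsewhere; $I$ is the identity matrix. *)

theory Defs
  imports "HOL-Analysis.Analysis" "HOL-Computational_Algebra.Polynomial"
begin

text \<open>M_2(C)[x] is represented via the canonical ring isomorphism
  M_2(C)[x] = M_2(C[x]): 2x2 matrices with entries in complex polynomials,
  multiplied with the matrix product (**).\<close>

type_synonym mpoly2 = "complex poly ^ 2 ^ 2"

definition mpow :: "mpoly2 \<Rightarrow> nat \<Rightarrow> mpoly2" where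
  "mpow A n = (((**) A) ^^ n) (mat 1)"

definition csmult :: "complex \<Rightarrow> mpoly2 \<Rightarrow> mpoly2" where
  "csmult c M = (\<chi> i j. smult c (M $ i $ j))"

definition e12 :: mpoly2 where
  "e12 = (\<chi> i j. if i = 1 \<and> j = 2 then 1 else 0)"

definition e21 :: mpoly2 where
  "e21 = (\<chi> i j. if i = 2 \<and> j = 1 then 1 else 0)"

definition beta0 :: mpoly2 where
  "beta0 = e12"

definition beta1 :: mpoly2 where
  "beta1 = mat [:0, 1:] + (\<chi> i j. [:0, 0, 1:] * e21 $ i $ j)"

end

theory Submission
  imports Defs
begin

(* With p = sum c_j x^j and q = sum d_j x^j, one computes
   beta1^j beta0 = [[0, x^j], [0, j x^(j+1)]] and beta0 beta1 beta0 = x^2 beta0, so the second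
   column of the linear combination is (p + x^2 q, x^2 (p' + x^2 q')). If it vanishes,
   differentiating p + x^2 q = 0 and subtracting p' + x^2 q' = 0 leaves 2 x q = 0;
   hence q = 0 and then p = 0. *)

lemma pderiv_sum: "pderiv (\<Sum>x\<in>A. f x) = (\<Sum>x\<in>A. pderiv (f x))"
  by (induction A rule: infinite_finite_induct) (simp_all add: pderiv_add)

lemma coeff_sum_monom_lessThan:
  "coeff (\<Sum>j<N. monom (c j) j) k = (if k < N then c k else 0)"
  by (simp add: coeff_sum coeff_monom)

lemma eq_0_if_pderiv_cancel:
  fixes p q r :: "'a::idom poly"
  assumes "p + r * q = 0" and "pderiv p + r * pderiv q = 0" and "pderiv r \<noteq> 0"
  shows "q = 0"
proof -
  have "pderiv (p + r * q) = pderiv p + r * pderiv q + pderiv r * q"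
    by (simp add: pderiv_add pderiv_mult algebra_simps)
  with assms have "pderiv r * q = 0"
    by simp
  with assms(3) show ?thesis
    by simp
qed

definition mat2 :: "complex poly \<Rightarrow> complex poly \<Rightarrow> complex poly \<Rightarrow> complex poly \<Rightarrow> mpoly2" where
  "mat2 a b c d = (\<chi> i j. if i = 1 then (if j = 1 then a else b) else (if j = 1 then c else d))"

lemma mat2_nth [simp]:
  "mat2 a b c d $ 1 $ 1 = a" "mat2 a b c d $ 1 $ 2 = b"
  "mat2 a b c d $ 2 $ 1 = c" "mat2 a b c d $ 2 $ 2 = d"
  by (simp_all add: mat2_def)

lemma mat2_eq_0_iff [simp]: "mat2 a b c d = 0 \<longleftrightarrow> a = 0 \<and> b = 0 \<and> c = 0 \<and> d = 0"
  by (auto simp: vec_eq_iff forall_2)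

lemma mat2_mult:
  "mat2 a b c d ** mat2 a' b' c' d' = mat2 (a*a' + b*c') (a*b' + b*d') (c*a' + d*c') (c*b' + d*d')"
  by (simp add: matrix_matrix_mult_def vec_eq_iff forall_2 sum_2)

lemma mat2_add:
  "mat2 a b c d + mat2 a' b' c' d' = mat2 (a + a') (b + b') (c + c') (d + d')"
  by (simp add: vec_eq_iff forall_2)

lemma sum_mat2:
  "(\<Sum>j\<in>A. mat2 (a j) (b j) (c j) (d j)) = mat2 (sum a A) (sum b A) (sum c A) (sum d A)"
  by (simp add: vec_eq_iff forall_2)

lemma csmult_mat2: "csmult k (mat2 a b c d) = mat2 (smult k a) (smult k b) (smult k c) (smult k d)"
  by (simp add: csmult_def vec_eq_iff forall_2)

lemma mat_1_eq_mat2: "mat 1 = mat2 1 0 0 1"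
  by (simp add: mat_def vec_eq_iff forall_2)

lemma beta0_eq_mat2: "beta0 = mat2 0 1 0 0"
  by (simp add: beta0_def e12_def vec_eq_iff forall_2)

lemma beta1_eq_mat2: "beta1 = mat2 (monom 1 1) 0 (monom 1 2) (monom 1 1)"
  by (simp add: beta1_def e21_def mat_def vec_eq_iff forall_2 monom_altdef power2_eq_square)

lemma mpow_beta1: "mpow beta1 j = mat2 (monom 1 j) 0 (monom (of_nat j) (j + 1)) (monom 1 j)"
proof (induction j)
  case 0
  then show ?case by (simp add: mpow_def mat_1_eq_mat2)
next
  case (Suc j)
  have "mpow beta1 (Suc j) = beta1 ** mpow beta1 j"
    by (simp add: mpow_def)
  also have "\<dots> = mat2 (monom 1 (Suc j)) 0 (monom (of_nat (Suc j)) (Suc j + 1)) (monom 1 (Suc j))"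
    unfolding Suc.IH by (simp add: beta1_eq_mat2 mat2_mult mult_monom add_monom algebra_simps)
  finally show ?case .
qed

lemma mpow_beta1_mult_beta0:
  "mpow beta1 j ** beta0 = mat2 0 (monom 1 j) 0 (monom 1 2 * pderiv (monom 1 j))"
  by (cases j) (simp_all add: mpow_beta1 beta0_eq_mat2 mat2_mult pderiv_monom mult_monom)

lemma mpow_beta1_mult_beta0_beta1_beta0:
  "mpow beta1 j ** beta0 ** beta1 ** beta0
     = mat2 0 (monom 1 2 * monom 1 j) 0 (monom 1 2 * (monom 1 2 * pderiv (monom 1 j)))"
  unfolding mpow_beta1
  by (cases j) (simp_all add: beta0_eq_mat2 beta1_eq_mat2 mat2_mult pderiv_monom mult_monom)

lemma sum_mpow_beta1_mult_beta0:
  "(\<Sum>j\<in>A. csmult (c j) (mpow beta1 j ** beta0))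
     = mat2 0 (\<Sum>j\<in>A. monom (c j) j) 0 (monom 1 2 * pderiv (\<Sum>j\<in>A. monom (c j) j))"
proof -
  have "csmult (c j) (mpow beta1 j ** beta0)
      = mat2 0 (monom (c j) j) 0 (monom 1 2 * pderiv (monom (c j) j))" for j
    by (simp add: mpow_beta1_mult_beta0 csmult_mat2 smult_monom pderiv_monom mult_monom mult.commute)
  then show ?thesis
    by (simp add: sum_mat2 pderiv_sum sum_distrib_left)
qed

lemma sum_mpow_beta1_mult_beta0_beta1_beta0:
  "(\<Sum>j\<in>A. csmult (d j) (mpow beta1 j ** beta0 ** beta1 ** beta0))
     = mat2 0 (monom 1 2 * (\<Sum>j\<in>A. monom (d j) j)) 0
         (monom 1 2 * (monom 1 2 * pderiv (\<Sum>j\<in>A. monom (d j) j)))"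
proof -
  have "csmult (d j) (mpow beta1 j ** beta0 ** beta1 ** beta0)
      = mat2 0 (monom 1 2 * monom (d j) j) 0 (monom 1 2 * (monom 1 2 * pderiv (monom (d j) j)))" for j
    by (simp add: mpow_beta1_mult_beta0_beta1_beta0 csmult_mat2 smult_monom pderiv_monom mult_monom
        mult.commute)
  then show ?thesis
    by (simp add: sum_mat2 pderiv_sum sum_distrib_left)
qed

theorem proposition2:
  fixes c d :: "nat \<Rightarrow> complex" and N :: nat
  assumes "(\<Sum>j<N. csmult (c j) (mpow beta1 j ** beta0))
         + (\<Sum>j<N. csmult (d j) (mpow beta1 j ** beta0 ** beta1 ** beta0)) = 0"
  shows "\<forall>j<N. c j = 0 \<and> d j = 0"
proof -
  define p where "p = (\<Sum>j<N. monom (c j) j)"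
  define q where "q = (\<Sum>j<N. monom (d j) j)"
  define x2 :: "complex poly" where "x2 = monom 1 2"
  have "p + x2 * q = 0" and "x2 * (pderiv p + x2 * pderiv q) = 0"
    using assms unfolding sum_mpow_beta1_mult_beta0 sum_mpow_beta1_mult_beta0_beta1_beta0
    by (simp_all add: mat2_add p_def q_def x2_def algebra_simps)
  moreover have "x2 \<noteq> 0" and "pderiv x2 \<noteq> 0"
    by (simp_all add: x2_def pderiv_monom)
  ultimately have "q = 0" and "p = 0"
    using eq_0_if_pderiv_cancel[of p x2 q] by auto
  then show ?thesis
    using coeff_sum_monom_lessThan[of c N] coeff_sum_monom_lessThan[of d N]
    by (metis p_def q_def coeff_0)
qed

end
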